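(* Let $R$ be a ring. If $A$ is a clopen subset of $J\text{-spec}(R)$, then there exists $e\in R$ such that $A=W(e)$ and $eR(1-e)\subseteq J(R)$.
   Context: Rings are associative with identity, not necessarily commutative; $J(R)$ is the Jacobson radical. $J\text{-spec}(R)$ is the set of all prime (two-sided) ideals $P$ of $R$ with $J(R)\subseteq P$, topologized so that the closed sets are exactly the sets $W(I)=\{P\in J\text{-spec}(R): I\subseteq P\}$ for ideals $I$ of $R$. For $a\in R$, $W(a)=W(RaR)$. *)

theory Defs
  imports Main
begin

definition ideal :: "'a::ring_1 set \<Rightarrow> bool" where
  "ideal I \<longleftrightarrow> 0 \<in> I \<and> (\<forall>x\<in>I. \<forall>y\<in>I. x + y \<in> I \<and> x - y \<in> I)
     \<and> (\<forall>x\<in>I. \<forall>r. r * x \<in> I \<and> x * r \<in> I)"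

definition left_ideal :: "'a::ring_1 set \<Rightarrow> bool" where
  "left_ideal I \<longleftrightarrow> 0 \<in> I \<and> (\<forall>x\<in>I. \<forall>y\<in>I. x + y \<in> I \<and> x - y \<in> I)
     \<and> (\<forall>x\<in>I. \<forall>r. r * x \<in> I)"

definition maximal_left_ideal :: "'a::ring_1 set \<Rightarrow> bool" where
  "maximal_left_ideal M \<longleftrightarrow> left_ideal M \<and> M \<noteq> UNIV
     \<and> (\<forall>N. left_ideal N \<and> M \<subseteq> N \<longrightarrow> N = M \<or> N = UNIV)"

definition jacobson :: "'a::ring_1 set" where
  "jacobson = \<Inter> {M. maximal_left_ideal M}"

definition prime_ideal :: "'a::ring_1 set \<Rightarrow> bool" where
  "prime_ideal P \<longleftrightarrow> ideal P \<and> P \<noteq> UNIV \<and>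
     (\<forall>I J. ideal I \<and> ideal J \<and> (\<forall>a\<in>I. \<forall>b\<in>J. a * b \<in> P) \<longrightarrow> I \<subseteq> P \<or> J \<subseteq> P)"

definition Jspec :: "'a::ring_1 set set" where
  "Jspec = {P. prime_ideal P \<and> jacobson \<subseteq> P}"

definition W :: "'a::ring_1 set \<Rightarrow> 'a set set" where
  "W I = {P \<in> Jspec. I \<subseteq> P}"

text \<open>Two-sided ideal generated by a set (for a singleton: RaR).\<close>
definition gen_ideal :: "'a::ring_1 set \<Rightarrow> 'a set" where
  "gen_ideal S = \<Inter> {I. ideal I \<and> S \<subseteq> I}"

definition W_elem :: "'a::ring_1 \<Rightarrow> 'a set set" where
  "W_elem a = W (gen_ideal {a})"

definition Jspec_closed :: "'a::ring_1 set set \<Rightarrow> bool" where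
  "Jspec_closed A \<longleftrightarrow> (\<exists>I. ideal I \<and> A = W I)"

definition Jspec_clopen :: "'a::ring_1 set set \<Rightarrow> bool" where
  "Jspec_clopen A \<longleftrightarrow> A \<subseteq> Jspec \<and> Jspec_closed A \<and> Jspec_closed (Jspec - A)"

end

theory Submission
  imports Defs
begin

(* Write A = W(I) and Jspec - A = W(K) for ideals I, K.  The ideal
   I + K + J(R) is all of R: otherwise it lies in a maximal left ideal M, and the
   primitive ideal P_M = {x. xR \<subseteq> M} (the annihilator of the simple module R/M)
   is a prime ideal containing J(R) and I + K, i.e. a point of W(I) \<inter> W(K) = {}.
   Writing 1 = i + k + j we get W(i) = W(I) = A (a prime avoiding A contains k and
   j, hence cannot contain i), and i r (1 - i) = i r k + i r j \<in> J(R) because the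
   product IK lies in every prime of W(I) \<union> W(K) = Jspec, and J(R) = \<Inter> Jspec. *)

lemma ideal_closed:
  assumes "ideal I"
  shows "0 \<in> I" "x \<in> I \<Longrightarrow> y \<in> I \<Longrightarrow> x + y \<in> I" "x \<in> I \<Longrightarrow> y \<in> I \<Longrightarrow> x - y \<in> I"
    "x \<in> I \<Longrightarrow> r * x \<in> I" "x \<in> I \<Longrightarrow> x * r \<in> I"
  using assms unfolding ideal_def by blast+

lemma ideal_imp_left_ideal: "ideal I \<Longrightarrow> left_ideal I"
  unfolding ideal_def left_ideal_def by blast

lemma left_ideal_eq_UNIV_iff:
  fixes L :: "'a::ring_1 set"
  assumes "left_ideal L"
  shows "L = UNIV \<longleftrightarrow> 1 \<in> L"
proof
  assume "1 \<in> L"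
  hence "r * 1 \<in> L" for r using assms unfolding left_ideal_def by blast
  thus "L = UNIV" by auto
qed simp

lemma ideal_Inter: "(\<And>I. I \<in> S \<Longrightarrow> ideal I) \<Longrightarrow> ideal (\<Inter>S)"
  unfolding ideal_def by blast

definition ideal_sum :: "'a::ring_1 set \<Rightarrow> 'a set \<Rightarrow> 'a set" where
  "ideal_sum I K = {i + k | i k. i \<in> I \<and> k \<in> K}"

lemma ideal_sum_memI: "i \<in> I \<Longrightarrow> k \<in> K \<Longrightarrow> i + k \<in> ideal_sum I K"
  unfolding ideal_sum_def by blast

lemma ideal_sum_memE:
  assumes "x \<in> ideal_sum I K"
  obtains i k where "x = i + k" "i \<in> I" "k \<in> K"
  using assms unfolding ideal_sum_def by blast

lemma ideal_sum_ideal: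
  assumes I: "ideal I" and K: "ideal K"
  shows "ideal (ideal_sum I K)"
  unfolding ideal_def
proof (intro conjI ballI allI)
  show "0 \<in> ideal_sum I K"
    using ideal_sum_memI[OF ideal_closed(1)[OF I] ideal_closed(1)[OF K]] by simp
next
  fix x y assume "x \<in> ideal_sum I K" "y \<in> ideal_sum I K"
  then obtain i1 k1 i2 k2 where xy: "x = i1 + k1" "y = i2 + k2"
    and mem: "i1 \<in> I" "k1 \<in> K" "i2 \<in> I" "k2 \<in> K"
    by (metis ideal_sum_memE)
  have "x + y = (i1 + i2) + (k1 + k2)" "x - y = (i1 - i2) + (k1 - k2)"
    using xy by (simp_all add: algebra_simps)
  moreover have "(i1 + i2) + (k1 + k2) \<in> ideal_sum I K" "(i1 - i2) + (k1 - k2) \<in> ideal_sum I K"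
    using mem by (simp_all add: ideal_sum_memI ideal_closed(2,3)[OF I] ideal_closed(2,3)[OF K])
  ultimately show "x + y \<in> ideal_sum I K" "x - y \<in> ideal_sum I K" by simp_all
next
  fix x r assume "x \<in> ideal_sum I K"
  then obtain i k where x: "x = i + k" and mem: "i \<in> I" "k \<in> K"
    by (rule ideal_sum_memE)
  have "r * x = r * i + r * k" "x * r = i * r + k * r"
    using x by (simp_all add: algebra_simps)
  moreover have "r * i + r * k \<in> ideal_sum I K" "i * r + k * r \<in> ideal_sum I K"
    using mem by (simp_all add: ideal_sum_memI ideal_closed(4,5)[OF I] ideal_closed(4,5)[OF K])
  ultimately show "r * x \<in> ideal_sum I K" "x * r \<in> ideal_sum I K" by simp_all
qed

lemma ideal_sum_upper:
  assumes "ideal I" "ideal K"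
  shows "I \<subseteq> ideal_sum I K" "K \<subseteq> ideal_sum I K"
  using ideal_sum_memI[of _ I 0 K] ideal_sum_memI[of 0 I _ K]
    ideal_closed(1)[OF assms(1)] ideal_closed(1)[OF assms(2)] by force+

lemma left_ideal_chain_Union:
  assumes ne: "C \<noteq> {}" and lC: "\<forall>N\<in>C. left_ideal N"
    and chain: "\<forall>X\<in>C. \<forall>Y\<in>C. X \<subseteq> Y \<or> Y \<subseteq> X"
  shows "left_ideal (\<Union>C)"
  unfolding left_ideal_def
proof (intro conjI ballI allI)
  show "0 \<in> \<Union>C" using ne lC by (auto simp: left_ideal_def)
next
  fix x y assume "x \<in> \<Union>C" "y \<in> \<Union>C"
  then obtain Z where Z: "Z \<in> C" "x \<in> Z" "y \<in> Z" using chain by blast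
  thus "x + y \<in> \<Union>C" "x - y \<in> \<Union>C" using lC by (auto simp: left_ideal_def)
next
  fix x r assume "x \<in> \<Union>C"
  thus "r * x \<in> \<Union>C" using lC unfolding left_ideal_def by blast
qed

lemma maximal_left_ideal_exists:
  fixes L :: "'a::ring_1 set"
  assumes L: "left_ideal L" and one: "1 \<notin> L"
  shows "\<exists>M. maximal_left_ideal M \<and> L \<subseteq> M"
proof -
  let ?A = "{N. left_ideal N \<and> L \<subseteq> N \<and> (1::'a) \<notin> N}"
  have "\<exists>U\<in>?A. \<forall>X\<in>C. X \<subseteq> U" if C: "C \<in> chains ?A" for C
  proof (cases "C = {}")
    case True thus ?thesis using L one by auto
  next
    case False
    have sub: "C \<subseteq> ?A" and chain: "\<forall>X\<in>C. \<forall>Y\<in>C. X \<subseteq> Y \<or> Y \<subseteq> X"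
      using C by (auto simp: chains_def chain_subset_def)
    have "left_ideal (\<Union>C)" using left_ideal_chain_Union[OF False _ chain] sub by blast
    moreover have "L \<subseteq> \<Union>C" "1 \<notin> \<Union>C" using False sub by auto
    ultimately show ?thesis by blast
  qed
  then obtain M where M: "M \<in> ?A" and max: "\<forall>X\<in>?A. M \<subseteq> X \<longrightarrow> X = M"
    using Zorn_Lemma2[of ?A] by blast
  have "maximal_left_ideal M"
    unfolding maximal_left_ideal_def
    using M max left_ideal_eq_UNIV_iff by blast
  thus ?thesis using M by blast
qed

lemma maximal_left_ideal_comaximal:
  fixes a :: "'a::ring_1"
  assumes M: "maximal_left_ideal M" and a: "a \<notin> M"
  shows "\<exists>m\<in>M. \<exists>s. 1 = m + s * a"
proof -
  define N where "N = {m + s * a | m s. m \<in> M}"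
  have lM: "left_ideal M" using M by (simp add: maximal_left_ideal_def)
  have "left_ideal N"
    unfolding left_ideal_def
  proof (intro conjI ballI allI)
    have "(0::'a) = 0 + 0 * a" by simp
    moreover have "(0::'a) \<in> M" using lM by (simp add: left_ideal_def)
    ultimately show "0 \<in> N" unfolding N_def by blast
  next
    fix x y assume "x \<in> N" "y \<in> N"
    then obtain m1 s1 m2 s2 where xy: "x = m1 + s1 * a" "y = m2 + s2 * a"
      and mem: "m1 \<in> M" "m2 \<in> M" unfolding N_def by blast
    have "x + y = (m1 + m2) + (s1 + s2) * a" "x - y = (m1 - m2) + (s1 - s2) * a"
      using xy by (simp_all add: algebra_simps)
    thus "x + y \<in> N" "x - y \<in> N"
      unfolding N_def using mem lM unfolding left_ideal_def by blast+
  next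
    fix x r assume "x \<in> N"
    then obtain m s where x: "x = m + s * a" and m: "m \<in> M" unfolding N_def by blast
    have "r * x = r * m + (r * s) * a" using x by (simp add: algebra_simps)
    thus "r * x \<in> N" unfolding N_def using m lM unfolding left_ideal_def by blast
  qed
  moreover have "M \<subseteq> N"
  proof
    fix x assume "x \<in> M"
    moreover have "x = x + 0 * a" by simp
    ultimately show "x \<in> N" unfolding N_def by blast
  qed
  moreover have "a \<in> N"
  proof -
    have "a = 0 + 1 * a" by simp
    moreover have "(0::'a) \<in> M" using lM by (simp add: left_ideal_def)
    ultimately show ?thesis unfolding N_def by blast
  qed
  ultimately have "N = UNIV" using M a unfolding maximal_left_ideal_def by blast
  hence "1 \<in> N" by simp
  thus ?thesis unfolding N_def by auto
qed

text \<open>For r \<notin> M the quotient (M : r) = {y. yr \<in> M} is again a maximal left ideal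
  (it is the annihilator of the generator r + M of the simple module R/M).\<close>
lemma maximal_left_ideal_quotient:
  fixes r :: "'a::ring_1"
  assumes M: "maximal_left_ideal M" and r: "r \<notin> M"
  shows "maximal_left_ideal {y. y * r \<in> M}"
proof -
  let ?Q = "{y. y * r \<in> M}"
  have lM: "left_ideal M" using M by (simp add: maximal_left_ideal_def)
  have lQ: "left_ideal ?Q"
    using lM unfolding left_ideal_def by (auto simp: algebra_simps mult.assoc)
  have proper: "?Q \<noteq> UNIV" using r by (metis UNIV_I mem_Collect_eq mult_1_left)
  have "N = UNIV" if N: "left_ideal N" "?Q \<subseteq> N" and new: "N \<noteq> ?Q" for N
  proof -
    obtain n where n: "n \<in> N" "n * r \<notin> M" using N new by auto
    then obtain m b where mb: "m \<in> M" "1 = m + b * (n * r)"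
      using maximal_left_ideal_comaximal[OF M] by blast
    have "y \<in> N" for y
    proof -
      have "(y - y * r * b * n) * r = y * r * m"
      proof -
        have "y * r = y * r * m + y * r * b * n * r"
          by (metis mb(2) mult.right_neutral distrib_left mult.assoc)
        hence "y * r - y * r * b * n * r = y * r * m" by (simp add: diff_eq_eq)
        thus ?thesis by (simp add: left_diff_distrib)
      qed
      moreover have "y * r * m \<in> M" using lM mb by (simp add: left_ideal_def)
      ultimately have "y - y * r * b * n \<in> N" using N by auto
      moreover have "y * r * b * n \<in> N" using N(1) n unfolding left_ideal_def by (simp add: mult.assoc)
      ultimately have "(y - y * r * b * n) + y * r * b * n \<in> N"
        using N(1) unfolding left_ideal_def by blast
      thus ?thesis by simp
    qed
    thus ?thesis by auto
  qed
  thus ?thesis using lQ proper unfolding maximal_left_ideal_def by blast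
qed

text \<open>The primitive ideal attached to a left ideal M: the largest two-sided ideal in M.\<close>
definition prim_ideal :: "'a::ring_1 set \<Rightarrow> 'a set" where
  "prim_ideal M = {x. \<forall>r. x * r \<in> M}"

lemma ideal_subset_prim_ideal: "ideal L \<Longrightarrow> L \<subseteq> M \<Longrightarrow> L \<subseteq> prim_ideal M"
  unfolding prim_ideal_def using ideal_closed(5) by blast

lemma jacobson_subset_prim_ideal:
  assumes M: "maximal_left_ideal M"
  shows "jacobson \<subseteq> prim_ideal M"
proof
  fix x :: 'a assume x: "x \<in> jacobson"
  have "x * r \<in> M" for r
  proof (cases "r \<in> M")
    case True thus ?thesis using M by (simp add: maximal_left_ideal_def left_ideal_def)
  next
    case False
    thus ?thesis using x maximal_left_ideal_quotient[OF M] unfolding jacobson_def by blast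
  qed
  thus "x \<in> prim_ideal M" unfolding prim_ideal_def by blast
qed

lemma prim_ideal_prime:
  fixes M :: "'a::ring_1 set"
  assumes M: "maximal_left_ideal M"
  shows "prime_ideal (prim_ideal M)"
proof -
  let ?P = "prim_ideal M"
  have lM: "left_ideal M" and proper: "M \<noteq> UNIV" using M by (auto simp: maximal_left_ideal_def)
  have idP: "ideal ?P"
    using lM unfolding prim_ideal_def ideal_def left_ideal_def by (auto simp: algebra_simps mult.assoc)
  have "1 * 1 \<notin> M" using proper left_ideal_eq_UNIV_iff[OF lM] by simp
  hence "1 \<notin> ?P" unfolding prim_ideal_def by blast
  hence properP: "?P \<noteq> UNIV" by blast
  have "I \<subseteq> ?P" if I: "ideal I" and IK: "\<forall>a\<in>I. \<forall>b\<in>K. a * b \<in> ?P" and K: "\<not> K \<subseteq> ?P" for I K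
  proof
    obtain k r where k: "k \<in> K" "k * r \<notin> M" using K by (auto simp: prim_ideal_def)
    then obtain m s where ms: "m \<in> M" "1 = m + s * (k * r)"
      using maximal_left_ideal_comaximal[OF M] by blast
    fix x assume x: "x \<in> I"
    have "x * t \<in> M" for t
    proof -
      have "x * t = x * t * m + (x * t * s * k) * r"
        by (metis ms(2) mult.right_neutral distrib_left mult.assoc)
      moreover have "x * t * m \<in> M" using lM ms by (simp add: left_ideal_def)
      moreover have "x * t * s \<in> I" using I x unfolding ideal_def by blast
      hence "(x * t * s * k) * r \<in> M" using IK k unfolding prim_ideal_def by blast
      ultimately show ?thesis using lM unfolding left_ideal_def by metis
    qed
    thus "x \<in> ?P" unfolding prim_ideal_def by blast
  qed
  thus ?thesis using idP properP unfolding prime_ideal_def by blast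
qed

lemma prim_ideal_in_Jspec: "maximal_left_ideal M \<Longrightarrow> prim_ideal M \<in> Jspec"
  using prim_ideal_prime jacobson_subset_prim_ideal unfolding Jspec_def by blast

lemma Jspec_ideal: "P \<in> Jspec \<Longrightarrow> ideal P"
  unfolding Jspec_def prime_ideal_def by blast

text \<open>J(R) is the intersection of all primes containing it (because every maximal
  left ideal contains a point of Jspec, namely its primitive ideal).\<close>
lemma jacobson_eq_Inter_Jspec: "(jacobson :: 'a::ring_1 set) = \<Inter> Jspec"
proof
  show "jacobson \<subseteq> \<Inter> Jspec" unfolding Jspec_def by blast
  show "\<Inter> Jspec \<subseteq> (jacobson :: 'a set)"
  proof
    fix x :: 'a assume x: "x \<in> \<Inter> Jspec"
    have "x \<in> M" if M: "maximal_left_ideal M" for M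
    proof -
      have "x \<in> prim_ideal M" using x prim_ideal_in_Jspec[OF M] by blast
      hence "x * 1 \<in> M" unfolding prim_ideal_def by blast
      thus ?thesis by simp
    qed
    thus "x \<in> jacobson" unfolding jacobson_def by blast
  qed
qed

lemma jacobson_ideal: "ideal (jacobson :: 'a::ring_1 set)"
  unfolding jacobson_eq_Inter_Jspec by (rule ideal_Inter) (rule Jspec_ideal)

lemma proper_ideal_in_Jspec_point:
  fixes L :: "'a::ring_1 set"
  assumes L: "ideal L" "jacobson \<subseteq> L" "1 \<notin> L"
  shows "\<exists>P\<in>Jspec. L \<subseteq> P"
proof -
  obtain M where M: "maximal_left_ideal M" "L \<subseteq> M"
    using maximal_left_ideal_exists[OF ideal_imp_left_ideal[OF L(1)] L(3)] by blast
  thus ?thesis using prim_ideal_in_Jspec[OF M(1)] ideal_subset_prim_ideal[OF L(1) M(2)] by blast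
qed

lemma W_disjoint_comaximal:
  fixes I K :: "'a::ring_1 set"
  assumes I: "ideal I" and K: "ideal K" and disj: "W I \<inter> W K = {}"
  shows "\<exists>i\<in>I. \<exists>k\<in>K. \<exists>j\<in>jacobson. 1 = i + k + j"
proof -
  define L where "L = ideal_sum (ideal_sum I K) jacobson"
  have IK: "ideal (ideal_sum I K)" by (rule ideal_sum_ideal[OF I K])
  have idL: "ideal L" unfolding L_def by (rule ideal_sum_ideal[OF IK jacobson_ideal])
  have sub: "I \<subseteq> L" "K \<subseteq> L" "jacobson \<subseteq> L"
    unfolding L_def using ideal_sum_upper[OF I K] ideal_sum_upper[OF IK jacobson_ideal] by auto
  have "1 \<in> L"
  proof (rule ccontr)
    assume "1 \<notin> L"
    then obtain P where "P \<in> Jspec" "L \<subseteq> P"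
      using proper_ideal_in_Jspec_point[OF idL sub(3)] by blast
    hence "P \<in> W I \<inter> W K" using sub unfolding W_def by blast
    thus False using disj by blast
  qed
  then obtain x j where "1 = x + j" "x \<in> ideal_sum I K" "j \<in> jacobson"
    unfolding L_def by (rule ideal_sum_memE)
  moreover obtain i k where "x = i + k" "i \<in> I" "k \<in> K"
    using \<open>x \<in> ideal_sum I K\<close> by (rule ideal_sum_memE)
  ultimately show ?thesis by blast
qed

lemma W_elem_iff: "P \<in> W_elem a \<longleftrightarrow> P \<in> Jspec \<and> a \<in> P"
proof -
  have "gen_ideal {a} \<subseteq> P \<longleftrightarrow> a \<in> P" if "ideal P" for P
    using that unfolding gen_ideal_def by blast
  thus ?thesis unfolding W_elem_def W_def using Jspec_ideal by blast
qed

lemma W_cover_product_in_jacobson: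
  assumes cover: "Jspec \<subseteq> W I \<union> W K" and a: "a \<in> I" and b: "b \<in> K"
  shows "a * b \<in> jacobson"
proof -
  have "a * b \<in> P" if P: "P \<in> Jspec" for P
    using cover P a b ideal_closed(4,5)[OF Jspec_ideal[OF P]] unfolding W_def by blast
  thus ?thesis unfolding jacobson_eq_Inter_Jspec by blast
qed

text \<open>With 1 = i + k + j as above, the single element i already cuts out W(I): a
  point of Jspec outside W(I) contains k and j, so containing i would force 1 into it.\<close>
lemma W_elem_eq_W:
  assumes outside: "Jspec - W I \<subseteq> W K" and I: "i \<in> I" and ikj: "k \<in> K" "j \<in> jacobson"
    and one: "1 = i + k + j"
  shows "W_elem i = W I"
proof (intro set_eqI iffI)
  fix P assume "P \<in> W I"
  thus "P \<in> W_elem i" using I unfolding W_elem_iff W_def by blast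
next
  fix P assume "P \<in> W_elem i"
  hence P: "P \<in> Jspec" "i \<in> P" unfolding W_elem_iff by blast+
  have idP: "ideal P" using Jspec_ideal[OF P(1)] .
  have "1 \<notin> P"
    using P(1) left_ideal_eq_UNIV_iff[OF ideal_imp_left_ideal[OF idP]]
    by (simp add: Jspec_def prime_ideal_def)
  moreover have "j \<in> P" using P(1) ikj(2) by (auto simp: Jspec_def)
  ultimately have "k \<notin> P" using P(2) one ideal_closed(2)[OF idP] by metis
  thus "P \<in> W I" using outside P(1) ikj(1) unfolding W_def by blast
qed

text \<open>Under the same decomposition, i is idempotent modulo J(R) in the strong sense
  i R (1 - i) \<subseteq> J(R), since 1 - i = k + j and I K \<subseteq> J(R).\<close>
lemma idempotent_mod_jacobson:
  assumes I: "ideal I" and cover: "Jspec \<subseteq> W I \<union> W K"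
    and ikj: "i \<in> I" "k \<in> K" "j \<in> jacobson" and one: "1 = i + k + j"
  shows "i * r * (1 - i) \<in> jacobson"
proof -
  have "1 - i = k + j" using one by (simp add: algebra_simps)
  hence "i * r * (1 - i) = i * r * k + i * r * j" by (simp add: distrib_left)
  moreover have "i * r * k \<in> jacobson"
    using W_cover_product_in_jacobson[OF cover ideal_closed(5)[OF I ikj(1)] ikj(2)] .
  moreover have "i * r * j \<in> jacobson" using ideal_closed(4)[OF jacobson_ideal ikj(3)] .
  ultimately show ?thesis using ideal_closed(2)[OF jacobson_ideal] by metis
qed

theorem lemma3p2:
  fixes A :: "'a::ring_1 set set"
  assumes "Jspec_clopen A"
  shows "\<exists>e. A = W_elem e \<and> (\<forall>r. e * r * (1 - e) \<in> jacobson)"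
proof -
  from assms obtain I K where I: "ideal I" "A = W I" and K: "ideal K" "Jspec - A = W K"
    and AJ: "A \<subseteq> Jspec"
    unfolding Jspec_clopen_def Jspec_closed_def by blast
  have disj: "W I \<inter> W K = {}" and cover: "Jspec \<subseteq> W I \<union> W K" using I K AJ by blast+
  obtain i k j where ikj: "i \<in> I" "k \<in> K" "j \<in> jacobson" and one: "1 = i + k + j"
    using W_disjoint_comaximal[OF I(1) K(1) disj] by blast
  have "A = W_elem i" using W_elem_eq_W[of I K i k j] I K ikj one by blast
  moreover have "\<forall>r. i * r * (1 - i) \<in> jacobson"
    using idempotent_mod_jacobson[OF I(1) cover ikj one] by blast
  ultimately show ?thesis by blast
qed

end
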